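(* Let $n\ge2$, $N\in\mathbb{Z}$, and let $P$ be an $N$-representative of type $\beta$ of some $[P]\in\mathcal{S}_{3,n}^\beta$. Then for all $i>N$ the quadrilateral with vertices $P_i,P_{i+1},P_{i+2},P_{i+3}$ (in this cyclic order) is convex; more precisely, all of the triples $(P_i,P_{i+1},P_{i+2})$, $(P_{i+1},P_{i+2},P_{i+3})$, $(P_i,P_{i+1},P_{i+3})$, $(P_i,P_{i+2},P_{i+3})$ are positive.
   Context: The affine patch $\mathbb{A}^2=\{[x:y:1]\}\subset\mathbb{RP}^2$ is identified with $\mathbb{R}^2$. For $V_1,V_2,V_3\in\mathbb{A}^2$ with affine coordinates $\tilde V_j=(x_j,y_j,1)$, $\mathcal{O}(V_1,V_2,V_3)=\det(\tilde V_1,\tilde V_2,\tilde V_3)$; the triple is positive if $\mathcal{O}>0$. $\operatorname{int}(V_1,V_2,V_3)$ is the interior of the affine triangle. A twisted $n$-gon is a map $P:\mathbb{Z}\to\mathbb{RP}^2$ with every three consecutive points non-collinear and $P_{i+n}=M(P_i)$ for a fixed $M\in\mathrm{PGL}_3(\mathbb{R})$; $\mathcal{P}_n$ is the set of classes modulo projective equivalence. $P$ is $k$-nice if $P_i,P_{i+1},P_{i+k},P_{i+k+1}$ are in general position for every $i$. For $k\ge3$, $[P]\in\mathcal{P}_n$ is a $k$-spiral of type $\beta$ if it is $k$-nice and for every $N\in\mathbb{Z}$ some representative $P$ (an $N$-representative of type $\beta$) satisfies, for all $i\ge N$: $P_i\in\mathbb{A}^2$, $(P_i,P_{i+1},P_{i+2})$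 positive, $(P_i,P_{i+1},P_{i+k})$ positive and $P_{i+k+1}\in\operatorname{int}(P_i,P_{i+1},P_{i+k})$. $\mathcal{S}_{k,n}^\beta$ is the set of such classes. *)

theory Defs
  imports "HOL-Analysis.Analysis"
begin

text \<open>Points of RP^2 are represented by nonzero homogeneous coordinate vectors in real^3;
  two vectors represent the same point iff they are proportional.\<close>

definition in_affine :: "real^3 \<Rightarrow> bool" where
  "in_affine v \<longleftrightarrow> v $ 3 \<noteq> 0"

definition aff_lift :: "real^3 \<Rightarrow> real^3" where
  "aff_lift v = (1 / v $ 3) *\<^sub>R v"

definition aff2 :: "real^3 \<Rightarrow> real^2" where
  "aff2 v = vector [v $ 1 / v $ 3, v $ 2 / v $ 3]"

definition orient :: "real^3 \<Rightarrow> real^3 \<Rightarrow> real^3 \<Rightarrow> real" where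
  "orient a b c = det (vector [aff_lift a, aff_lift b, aff_lift c] :: real^3^3)"

definition positive_triple :: "real^3 \<Rightarrow> real^3 \<Rightarrow> real^3 \<Rightarrow> bool" where
  "positive_triple a b c \<longleftrightarrow> orient a b c > 0"

definition in_triangle_int :: "real^3 \<Rightarrow> real^3 \<Rightarrow> real^3 \<Rightarrow> real^3 \<Rightarrow> bool" where
  "in_triangle_int p a b c \<longleftrightarrow> aff2 p \<in> interior (convex hull {aff2 a, aff2 b, aff2 c})"

definition collinear_proj :: "real^3 \<Rightarrow> real^3 \<Rightarrow> real^3 \<Rightarrow> bool" where
  "collinear_proj a b c \<longleftrightarrow> det (vector [a, b, c] :: real^3^3) = 0"

definition general_position4 :: "real^3 \<Rightarrow> real^3 \<Rightarrow> real^3 \<Rightarrow> real^3 \<Rightarrow> bool" where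
  "general_position4 a b c d \<longleftrightarrow>
     \<not> collinear_proj a b c \<and> \<not> collinear_proj a b d \<and>
     \<not> collinear_proj a c d \<and> \<not> collinear_proj b c d"

definition twisted_ngon :: "nat \<Rightarrow> (int \<Rightarrow> real^3) \<Rightarrow> bool" where
  "twisted_ngon n P \<longleftrightarrow>
     (\<forall>i. P i \<noteq> 0) \<and>
     (\<forall>i. \<not> collinear_proj (P i) (P (i+1)) (P (i+2))) \<and>
     (\<exists>M :: real^3^3. invertible M \<and>
        (\<forall>i. \<exists>c. c \<noteq> 0 \<and> P (i + int n) = c *\<^sub>R (M *v P i)))"

definition proj_equiv :: "(int \<Rightarrow> real^3) \<Rightarrow> (int \<Rightarrow> real^3) \<Rightarrow> bool" where
  "proj_equiv P Q \<longleftrightarrow>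
     (\<exists>A :: real^3^3. invertible A \<and> (\<forall>i. \<exists>c. c \<noteq> 0 \<and> Q i = c *\<^sub>R (A *v P i)))"

definition k_nice :: "nat \<Rightarrow> (int \<Rightarrow> real^3) \<Rightarrow> bool" where
  "k_nice k P \<longleftrightarrow>
     (\<forall>i. general_position4 (P i) (P (i+1)) (P (i + int k)) (P (i + int k + 1)))"

definition N_rep_beta :: "nat \<Rightarrow> int \<Rightarrow> (int \<Rightarrow> real^3) \<Rightarrow> bool" where
  "N_rep_beta k N P \<longleftrightarrow>
     (\<forall>i\<ge>N. in_affine (P i) \<and>
        positive_triple (P i) (P (i+1)) (P (i+2)) \<and>
        positive_triple (P i) (P (i+1)) (P (i + int k)) \<and>
        in_triangle_int (P (i + int k + 1)) (P i) (P (i+1)) (P (i + int k)))"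

definition spiral_beta :: "nat \<Rightarrow> nat \<Rightarrow> (int \<Rightarrow> real^3) \<Rightarrow> bool" where
  "spiral_beta k n P \<longleftrightarrow>
     k \<ge> 3 \<and> twisted_ngon n P \<and> k_nice k P \<and>
     (\<forall>N. \<exists>Q. twisted_ngon n Q \<and> proj_equiv P Q \<and> N_rep_beta k N Q)"

end

theory Submission
  imports Defs
begin

text \<open>The triples \<open>(P i, P (i+1), P (i+2))\<close>, \<open>(P (i+1), P (i+2), P (i+3))\<close> and
  \<open>(P i, P (i+1), P (i+3))\<close> are positive directly by the definition of an \<open>N\<close>-representative
  at the indices \<open>i\<close> and \<open>i + 1\<close>. For the last triple use the index \<open>i - 1 \<ge> N\<close>: the point
  \<open>P (i+3)\<close> lies inside the positive triangle \<open>(P (i-1), P i, P (i+2))\<close>, hence strictly on the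
  positive side of its edge from \<open>P i\<close> to \<open>P (i+2)\<close>.\<close>

definition orient2 :: "real^2 \<Rightarrow> real^2 \<Rightarrow> real^2 \<Rightarrow> real" where
  "orient2 a b c = (b$1 - a$1) * (c$2 - a$2) - (c$1 - a$1) * (b$2 - a$2)"

lemma orient_eq_orient2_aff2:
  assumes "in_affine a" "in_affine b" "in_affine c"
  shows "orient a b c = orient2 (aff2 a) (aff2 b) (aff2 c)"
  using assms unfolding orient_def orient2_def aff2_def aff_lift_def in_affine_def
  by (simp add: det_3 vector_3 vector_2 field_simps)

lemma orient2_convex_combination:
  assumes "u + v + w = 1"
  shows "orient2 b c (u *\<^sub>R a + v *\<^sub>R b + w *\<^sub>R c) = u * orient2 a b c"
proof -
  have w: "w = 1 - u - v" using assms by simp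
  show ?thesis unfolding orient2_def w by (simp add: algebra_simps)
qed

lemma orient2_nonneg_on_convex_hull:
  assumes "orient2 a b c > 0" "q \<in> convex hull {a, b, c}"
  shows "orient2 b c q \<ge> 0"
proof -
  from assms(2) obtain u v w where "q = u *\<^sub>R a + v *\<^sub>R b + w *\<^sub>R c"
    and "0 \<le> u" "0 \<le> v" "0 \<le> w" "u + v + w = 1"
    unfolding convex_hull_3 by blast
  then show ?thesis using assms(1) orient2_convex_combination by simp
qed

text \<open>\<open>g\<close> is the gradient of the affine function \<open>orient2 b c\<close>: a small step from \<open>p\<close> against
  \<open>g\<close> stays in the triangle, where \<open>orient2 b c \<ge> 0\<close>, and lowers the value by a positive amount.\<close>

lemma orient2_pos_on_interior:
  assumes "orient2 a b c > 0" "p \<in> interior (convex hull {a, b, c})"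
  shows "orient2 b c p > 0"
proof -
  obtain e where e: "e > 0" "ball p e \<subseteq> convex hull {a, b, c}"
    using assms(2) by (meson interior_subset mem_interior)
  define g :: "real^2" where "g = vector [b$2 - c$2, c$1 - b$1]"
  have "b \<noteq> c" using assms(1) unfolding orient2_def by auto
  then have "b$1 \<noteq> c$1 \<or> b$2 \<noteq> c$2" by (auto simp: vec_eq_iff forall_2)
  then have g_sq: "(g$1)^2 + (g$2)^2 > 0"
    by (auto simp: g_def vector_2 add_pos_nonneg add_nonneg_pos)
  then have g_norm: "norm g > 0" by auto
  define t where "t = e / (2 * norm g)"
  have t: "t > 0" using e g_norm by (simp add: t_def)
  define q where "q = p - t *\<^sub>R g"
  have "dist p q = e / 2" using g_norm e by (simp add: q_def t_def dist_norm)
  then have "q \<in> convex hull {a, b, c}" using e by auto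
  then have "orient2 b c q \<ge> 0" using orient2_nonneg_on_convex_hull assms(1) by blast
  moreover have "orient2 b c q = orient2 b c p - t * ((g$1)^2 + (g$2)^2)"
    unfolding q_def orient2_def g_def by (simp add: algebra_simps power2_eq_square)
  ultimately show ?thesis using t g_sq by (smt (verit) mult_pos_pos)
qed

lemma positive_triple_of_in_triangle_int:
  assumes "in_affine a" "in_affine b" "in_affine c" "in_affine p"
    and "positive_triple a b c" "in_triangle_int p a b c"
  shows "positive_triple b c p"
  using assms orient2_pos_on_interior
  unfolding positive_triple_def in_triangle_int_def
  by (simp add: orient_eq_orient2_aff2)

theorem mainTheorem13:
  fixes n :: nat and N :: int and P :: "int \<Rightarrow> real^3"
  assumes "n \<ge> 2"
    and "spiral_beta 3 n P"
    and "N_rep_beta 3 N P"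
  shows "\<forall>i>N. positive_triple (P i) (P (i+1)) (P (i+2)) \<and>
                positive_triple (P (i+1)) (P (i+2)) (P (i+3)) \<and>
                positive_triple (P i) (P (i+1)) (P (i+3)) \<and>
                positive_triple (P i) (P (i+2)) (P (i+3))"
proof (intro allI impI)
  fix i assume "i > N"
  have rep: "in_affine (P j) \<and> positive_triple (P j) (P (j+1)) (P (j+2)) \<and>
      positive_triple (P j) (P (j+1)) (P (j+3)) \<and>
      in_triangle_int (P (j+4)) (P j) (P (j+1)) (P (j+3))" if "j \<ge> N" for j
    using assms(3) that unfolding N_rep_beta_def by (simp add: add.assoc)
  have shift: "i - 1 + 1 = i" "i - 1 + 3 = i + 2" "i - 1 + 4 = i + 3" "i + 1 + 1 = i + 2"
    "i + 1 + 2 = i + 3" by simp_all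
  have pos: "positive_triple (P (i-1)) (P i) (P (i+2))"
    and int: "in_triangle_int (P (i+3)) (P (i-1)) (P i) (P (i+2))"
    using rep[of "i - 1"] \<open>i > N\<close> unfolding shift by simp_all
  have aff: "in_affine (P j)" if "j \<in> {i-1, i, i+2, i+3}" for j
    using rep[of j] that \<open>i > N\<close> by auto
  have "positive_triple (P i) (P (i+2)) (P (i+3))"
    using positive_triple_of_in_triangle_int[OF aff aff aff aff pos int] by simp
  then show "positive_triple (P i) (P (i+1)) (P (i+2)) \<and>
      positive_triple (P (i+1)) (P (i+2)) (P (i+3)) \<and>
      positive_triple (P i) (P (i+1)) (P (i+3)) \<and>
      positive_triple (P i) (P (i+2)) (P (i+3))"
    using rep[of i] rep[of "i+1"] \<open>i > N\<close> unfolding shift by simp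
qed

end
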